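(* Let $f:\mathbb D\to\mathbb D$ be analytic and suppose there is $c\in(0,1)$ with $\sup\{D_h(f)(z): z\in\mathbb D,\ |f(z)|\ge c\}<1$. Then $\sup\{D_h(f)(z):z\in\mathbb D\}<1$.
   Context: $D_h(f)(z)=\frac{(1-|z|^2)|f'(z)|}{1-|f(z)|^2}$; the supremum over the empty set is taken to be $0$. *)

theory Defs
  imports "HOL-Complex_Analysis.Complex_Analysis"
begin

definition hyp_deriv :: "(complex \<Rightarrow> complex) \<Rightarrow> complex \<Rightarrow> real" where
  "hyp_deriv f z = (1 - (cmod z)^2) * cmod (deriv f z) / (1 - (cmod (f z))^2)"

definition sup0 :: "real set \<Rightarrow> real" where
  "sup0 S = (if S = {} then 0 else Sup S)"

end

theory Submission
  imports Defs
begin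

text \<open>Suppose \<open>d = D\<^sub>h(f)(z\<^sub>0)\<close> is close to 1. Conjugating \<open>f\<close> by disc automorphisms gives
  \<open>g\<close> with \<open>g 0 = 0\<close>, \<open>|g' 0| = d\<close> and the same hyperbolic derivatives; write \<open>g z = z h z\<close>
  with \<open>|h| \<le> 1\<close> and \<open>|h 0| = d\<close>. On the circle \<open>|w| = r\<close>, Schwarz--Pick for \<open>h\<close> keeps \<open>h w\<close>
  within \<open>r (1 - d\<^sup>2) / (1 - r d)\<close> of \<open>h 0\<close>, so both \<open>|h w|\<close> and \<open>D\<^sub>h(g)(w)\<close> tend to 1 as
  \<open>d \<rightarrow> 1\<close>. Choosing the direction of \<open>w\<close> so that \<open>Re (conj (f z\<^sub>0) g w) \<ge> 0\<close>, the automorphism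
  back to \<open>f\<close> does not decrease \<open>|g w|\<close>, so the corresponding point \<open>z\<close> has \<open>|f z| \<ge> r |h w| > c\<close>
  for \<open>r = (1 + c)/2\<close>. Hence \<open>D\<^sub>h(f)(z\<^sub>0)\<close> close to 1 would force \<open>D\<^sub>h(f)(z)\<close> above the
  supremum over the level set \<open>|f| \<ge> c\<close>.\<close>

abbreviation moebius :: "complex \<Rightarrow> complex \<Rightarrow> complex" where
  "moebius b \<equiv> Moebius_function 0 b"

lemma moebius_denom_nonzero:
  assumes "cmod b < 1" "cmod z < 1"
  shows "1 - cnj b * z \<noteq> 0"
proof -
  have "cmod (cnj b * z) < 1" using norm_mult_less[of "cnj b" 1 z 1] assms by simp
  then show ?thesis by auto
qed

lemma one_minus_norm_moebius_sq:
  assumes "cmod b < 1" "cmod z < 1"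
  shows "1 - (cmod (moebius b z))^2 = (1 - (cmod b)^2) * (1 - (cmod z)^2) / (cmod (1 - cnj b * z))^2"
proof -
  have "(cmod (1 - cnj b * z))^2 - (cmod (z - b))^2 = (1 - (cmod b)^2) * (1 - (cmod z)^2)"
    unfolding cmod_power2 by (simp add: power2_eq_square algebra_simps)
  then show ?thesis using moebius_denom_nonzero[OF assms]
    by (simp add: Moebius_function_simple norm_divide power_divide field_simps)
qed

lemma moebius_has_field_derivative:
  assumes "1 - cnj b * z \<noteq> 0"
  shows "(moebius b has_field_derivative of_real (1 - (cmod b)^2) / (1 - cnj b * z)^2) (at z)"
proof -
  have "b * cnj b = of_real ((cmod b)^2)" using complex_norm_square[of b] by simp
  then have num: "1 * (1 - cnj b * z) - (z - b) * (0 - cnj b * 1) = of_real (1 - (cmod b)^2)"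
    by (simp add: algebra_simps)
  have "((\<lambda>z. (z - b) / (1 - cnj b * z)) has_field_derivative
     ((1 * (1 - cnj b * z) - (z - b) * (0 - cnj b * 1)) / (1 - cnj b * z)^2)) (at z)"
    using assms by (intro derivative_eq_intros) (auto simp: power2_eq_square)
  then show ?thesis unfolding num Moebius_function_simple[abs_def] .
qed

lemma norm_deriv_moebius:
  assumes "cmod b < 1" "cmod z < 1"
  shows "cmod (deriv (moebius b) z) = (1 - (cmod (moebius b z))^2) / (1 - (cmod z)^2)"
proof -
  have "(cmod b)^2 < 1" "(cmod z)^2 < 1"
    using assms by (simp_all add: power_less_one_iff abs_square_less_1)
  have dm: "deriv (moebius b) z = of_real (1 - (cmod b)^2) / (1 - cnj b * z)^2"
    using moebius_has_field_derivative[OF moebius_denom_nonzero[OF assms]] by (rule DERIV_imp_deriv)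
  have "cmod (deriv (moebius b) z) = (1 - (cmod b)^2) / (cmod (1 - cnj b * z))^2"
    using \<open>(cmod b)^2 < 1\<close> unfolding dm norm_divide norm_power norm_of_real by simp
  then show ?thesis using one_minus_norm_moebius_sq[OF assms] \<open>(cmod z)^2 < 1\<close>
    by (simp add: field_simps)
qed

lemma moebius_conj_self_map:
  assumes hol: "F holomorphic_on ball 0 1" and into: "F ` ball 0 1 \<subseteq> ball 0 1"
    and a: "cmod a < 1" and b: "cmod b < 1"
  shows "(\<lambda>x. moebius a (F (moebius b x))) holomorphic_on ball 0 1"
    and "(\<lambda>x. moebius a (F (moebius b x))) ` ball 0 1 \<subseteq> ball 0 1"
proof -
  have mb: "moebius b ` ball 0 1 \<subseteq> ball 0 1" using Moebius_function_norm_lt_1[OF b] by auto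
  have ma: "moebius a ` ball 0 1 \<subseteq> ball 0 1" using Moebius_function_norm_lt_1[OF a] by auto
  have "(F \<circ> moebius b) ` ball 0 1 \<subseteq> ball 0 1" using into mb by (auto simp: image_subset_iff)
  then show "(\<lambda>x. moebius a (F (moebius b x))) holomorphic_on ball 0 1"
    using holomorphic_on_compose_gen[OF holomorphic_on_compose_gen[OF
        Moebius_function_holomorphic[OF b] hol mb] Moebius_function_holomorphic[OF a]]
    by (simp add: o_def)
  show "(\<lambda>x. moebius a (F (moebius b x))) ` ball 0 1 \<subseteq> ball 0 1"
    using into mb ma by (auto simp: image_subset_iff)
qed

lemma hyp_deriv_moebius_conj:
  assumes hol: "F holomorphic_on ball 0 1" and into: "F ` ball 0 1 \<subseteq> ball 0 1"
    and a: "cmod a < 1" and b: "cmod b < 1" and w: "cmod w < 1"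
  shows "hyp_deriv (\<lambda>x. moebius a (F (moebius b x))) w = hyp_deriv F (moebius b w)"
proof -
  define u where "u = moebius b w"
  have u: "cmod u < 1" unfolding u_def by (rule Moebius_function_norm_lt_1[OF b w])
  then have v: "cmod (F u) < 1" using into by (metis image_subset_iff mem_ball_0)
  have "((\<lambda>x. moebius a (F (moebius b x))) has_field_derivative
      deriv (moebius a) (F u) * (deriv F u * deriv (moebius b) w)) (at w)"
    using a b w u v unfolding u_def
    by (intro DERIV_chain2 holomorphic_derivI[OF Moebius_function_holomorphic]
        holomorphic_derivI[OF hol]) auto
  then have dG: "deriv (\<lambda>x. moebius a (F (moebius b x))) w
      = deriv (moebius a) (F u) * (deriv F u * deriv (moebius b) w)"
    by (rule DERIV_imp_deriv)
  have "1 - (cmod w)^2 \<noteq> 0" "1 - (cmod (moebius a (F u)))^2 \<noteq> 0"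
    using w Moebius_function_norm_lt_1[OF a v, of 0] by (auto simp: abs_square_eq_1)
  moreover have "A * (B / C * (D * (U / A))) / B = U * D / C" if "A \<noteq> 0" "B \<noteq> 0"
    for A B C D U :: real
    using that by (simp add: field_simps)
  ultimately show ?thesis
    unfolding hyp_deriv_def u_def[symmetric] dG norm_mult
      norm_deriv_moebius[OF a v] norm_deriv_moebius[OF b w, folded u_def]
    by simp
qed

lemma hyp_deriv_at_fixed_origin: "G 0 = 0 \<Longrightarrow> hyp_deriv G 0 = cmod (deriv G 0)"
  by (simp add: hyp_deriv_def)

lemma hyp_deriv_le_1:
  assumes hol: "F holomorphic_on ball 0 1" and into: "F ` ball 0 1 \<subseteq> ball 0 1"
    and z: "cmod z < 1"
  shows "hyp_deriv F z \<le> 1"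
proof -
  have Fz: "cmod (F z) < 1" using into z by (metis image_subset_iff mem_ball_0)
  define G where "G = (\<lambda>x. moebius (F z) (F (moebius (-z) x)))"
  have "G holomorphic_on ball 0 1" "G ` ball 0 1 \<subseteq> ball 0 1"
    unfolding G_def using moebius_conj_self_map[OF hol into Fz] z by auto
  moreover have G0: "G 0 = 0"
    unfolding G_def by (simp add: Moebius_function_of_zero Moebius_function_eq_zero)
  ultimately have "cmod (deriv G 0) \<le> 1"
    using Schwarz_Lemma(2)[of G 0] by (auto simp: image_subset_iff)
  moreover have "hyp_deriv G 0 = hyp_deriv F z"
    unfolding G_def using hyp_deriv_moebius_conj[OF hol into Fz, of "-z" 0] z
    by (simp add: Moebius_function_of_zero)
  ultimately show ?thesis using hyp_deriv_at_fixed_origin[of G, OF G0] by simp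
qed

lemma schwarz_pick_deriv:
  assumes hol: "F holomorphic_on ball 0 1" and into: "F ` ball 0 1 \<subseteq> ball 0 1"
    and z: "cmod z < 1"
  shows "(1 - (cmod z)^2) * cmod (deriv F z) \<le> 1 - (cmod (F z))^2"
proof -
  have "cmod (F z) < 1" using into z by (metis image_subset_iff mem_ball_0)
  then have "0 < 1 - (cmod (F z))^2" by (simp add: abs_square_less_1)
  then show ?thesis
    using hyp_deriv_le_1[OF assms] unfolding hyp_deriv_def by (simp add: divide_le_eq_1)
qed

lemma schwarz_pick_origin:
  assumes hol: "F holomorphic_on ball 0 1" and into: "F ` ball 0 1 \<subseteq> ball 0 1"
    and w: "cmod w < 1"
  shows "cmod (F w - F 0) \<le> cmod w * cmod (1 - cnj (F 0) * F w)"
proof -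
  have F0: "cmod (F 0) < 1" and Fw: "cmod (F w) < 1"
    using into w by (auto simp: image_subset_iff)
  define G where "G = (\<lambda>x. moebius (F 0) (F x))"
  have "G holomorphic_on ball 0 1" "G ` ball 0 1 \<subseteq> ball 0 1"
    unfolding G_def using moebius_conj_self_map[OF hol into F0, of 0]
    by (simp_all add: Moebius_function_simple)
  moreover have "G 0 = 0" unfolding G_def by (simp add: Moebius_function_eq_zero)
  ultimately have "cmod (G w) \<le> cmod w"
    using Schwarz_Lemma(1)[of G w] w by (auto simp: image_subset_iff)
  moreover have "G w = (F w - F 0) / (1 - cnj (F 0) * F w)"
    unfolding G_def by (simp add: Moebius_function_simple)
  moreover have "0 < cmod (1 - cnj (F 0) * F w)" using moebius_denom_nonzero[OF F0 Fw] by simp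
  ultimately show ?thesis by (simp add: norm_divide divide_le_eq mult.commute)
qed

lemma schwarz_factor:
  assumes hol: "g holomorphic_on ball 0 1" and into: "g ` ball 0 1 \<subseteq> ball 0 1" and g0: "g 0 = 0"
  obtains h where "h holomorphic_on ball 0 1" "\<And>z. cmod z < 1 \<Longrightarrow> g z = z * h z"
    "deriv g 0 = h 0" "\<And>z. cmod z < 1 \<Longrightarrow> cmod (h z) \<le> 1"
proof -
  obtain h where holh: "h holomorphic_on ball 0 1" and gh: "\<And>z. cmod z < 1 \<Longrightarrow> g z = z * h z"
    and dh0: "deriv g 0 = h 0"
    using Schwarz3[OF hol g0] by blast
  have gin: "\<And>z. cmod z < 1 \<Longrightarrow> cmod (g z) < 1" using into by (auto simp: image_subset_iff)
  have "cmod (h z) \<le> 1" if z: "cmod z < 1" for z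
  proof (cases "z = 0")
    case True
    then show ?thesis using Schwarz_Lemma(2)[OF hol g0 gin z] dh0 by simp
  next
    case False
    have "cmod z * cmod (h z) \<le> cmod z * 1"
      using Schwarz_Lemma(1)[OF hol g0 gin z] gh[OF z] by (simp add: norm_mult)
    then show ?thesis using False by simp
  qed
  then show ?thesis using that holh gh dh0 by blast
qed

lemma holomorphic_closed_disc_cases:
  assumes holh: "h holomorphic_on ball 0 1" and hle: "\<And>z. cmod z < 1 \<Longrightarrow> cmod (h z) \<le> 1"
  obtains k where "cmod k = 1" "\<And>z. cmod z < 1 \<Longrightarrow> h z = k"
    | "h ` ball 0 1 \<subseteq> ball 0 1"
proof (cases "\<exists>z. cmod z < 1 \<and> cmod (h z) = 1")
  case True
  then obtain z where z: "cmod z < 1" "cmod (h z) = 1" by blast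
  have sub: "ball z (1 - cmod z) \<subseteq> ball 0 1" by (simp add: ball_subset_ball_iff)
  have "h constant_on ball 0 1"
  proof (rule Schwarz2[OF holh _ sub])
    show "0 < 1 - cmod z" using z by simp
    fix x assume "cmod (z - x) < 1 - cmod z"
    then have "cmod x < 1" using sub by (auto simp: dist_norm)
    then show "cmod (h x) \<le> cmod (h z)" using hle z by simp
  qed
  then obtain k where "\<And>x. x \<in> ball 0 1 \<Longrightarrow> h x = k" by (auto simp: constant_on_def)
  then show ?thesis using that(1)[of k] z by auto
next
  case False
  then have "\<And>z. cmod z < 1 \<Longrightarrow> cmod (h z) < 1" using hle by (metis less_le)
  then show ?thesis using that(2) by (simp add: image_subset_iff)
qed

text \<open>By Schwarz--Pick, a holomorphic \<open>h\<close> into the closed disc with \<open>|h 0| = d\<close> maps the circle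
  \<open>|w| = r\<close> into the Euclidean disc of centre \<open>h 0\<close> and this radius.\<close>
definition pick_radius :: "real \<Rightarrow> real \<Rightarrow> real" where
  "pick_radius r d = r * (1 - d^2) / (1 - r * d)"

lemma closed_disc_map_estimates:
  assumes holh: "h holomorphic_on ball 0 1" and hle: "\<And>z. cmod z < 1 \<Longrightarrow> cmod (h z) \<le> 1"
    and w: "cmod w < 1"
  shows "cmod (h w - h 0) \<le> pick_radius (cmod w) (cmod (h 0))"
    and "(1 - (cmod w)^2) * cmod (deriv h w) \<le> 1 - (cmod (h w))^2"
proof -
  define r d e where "r = cmod w" and "d = cmod (h 0)" and "e = cmod (h w - h 0)"
  have d: "0 \<le> d" "d \<le> 1" using hle[of 0] unfolding d_def by simp_all
  have "r * d \<le> r * 1" using d unfolding r_def by (intro mult_left_mono) auto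
  then have rd: "0 < 1 - r * d" using w unfolding r_def by simp
  have "e \<le> pick_radius r d \<and> (1 - r^2) * cmod (deriv h w) \<le> 1 - (cmod (h w))^2"
  proof (rule holomorphic_closed_disc_cases[OF holh hle])
    fix k assume k: "cmod k = 1" and hk: "\<And>z. cmod z < 1 \<Longrightarrow> h z = k"
    have "((\<lambda>_. k) has_field_derivative 0) (at w)" by simp
    then have "(h has_field_derivative 0) (at w)"
      by (rule has_field_derivative_transform_within_open[OF _ open_ball[of 0 1]])
        (use w hk in simp_all)
    then have "deriv h w = 0" by (rule DERIV_imp_deriv)
    moreover have "e = 0" "d = 1" "cmod (h w) = 1" using k hk w unfolding e_def d_def by simp_all
    ultimately show ?thesis unfolding pick_radius_def by simp
  next
    assume into: "h ` ball 0 1 \<subseteq> ball 0 1"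
    have "cmod (1 - cnj (h 0) * h w) \<le> cmod (1 - cnj (h 0) * h 0) + cmod (cnj (h 0) * (h w - h 0))"
      using norm_triangle_ineq4[of "1 - cnj (h 0) * h 0" "cnj (h 0) * (h w - h 0)"]
      by (simp add: algebra_simps)
    also have "\<dots> = (1 - d^2) + d * e"
    proof -
      have "1 - cnj (h 0) * h 0 = of_real (1 - d^2)"
        unfolding d_def using complex_norm_square[of "h 0"] by (simp add: mult.commute)
      then have "cmod (1 - cnj (h 0) * h 0) = 1 - d^2"
        using d abs_square_le_1[of d] by (simp only: norm_of_real) simp
      then show ?thesis unfolding d_def e_def by (simp add: norm_mult)
    qed
    finally have "e \<le> r * ((1 - d^2) + d * e)"
      using schwarz_pick_origin[OF holh into w] w unfolding e_def r_def
      by (meson mult_left_mono norm_ge_zero order_trans)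
    then have "e * (1 - r * d) \<le> r * (1 - d^2)" by (simp add: algebra_simps)
    then show ?thesis using rd schwarz_pick_deriv[OF holh into w]
      unfolding pick_radius_def r_def by (simp add: pos_le_divide_eq)
  qed
  then show "cmod (h w - h 0) \<le> pick_radius (cmod w) (cmod (h 0))"
    and "(1 - (cmod w)^2) * cmod (deriv h w) \<le> 1 - (cmod (h w))^2"
    unfolding r_def d_def e_def by simp_all
qed

text \<open>From \<open>g' = h + z h'\<close> and Schwarz--Pick for \<open>h\<close>: a lower bound for the hyperbolic
  derivative of \<open>z h z\<close> at \<open>|z| = r\<close> when \<open>|h z| \<ge> t\<close>.\<close>
definition hyp_deriv_bound :: "real \<Rightarrow> real \<Rightarrow> real" where
  "hyp_deriv_bound r t = ((1 - r^2) * t - r * (1 - t^2)) / (1 - r^2 * t^2)"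

lemma hyp_deriv_bound_le:
  fixes r t s D :: real
  assumes r: "0 \<le> r" "r < 1" and t: "0 \<le> t" "t \<le> s" "s \<le> 1" and D: "0 \<le> D"
    and hD: "(1 - r^2) * s - r * (1 - s^2) \<le> (1 - r^2) * D"
  shows "hyp_deriv_bound r t \<le> (1 - r^2) * D / (1 - (r * s)^2)"
proof -
  have r2: "0 \<le> r^2" "r^2 < 1" using r by (simp_all add: abs_square_less_1)
  have ts: "t^2 \<le> s^2" "s^2 \<le> 1" using t by (simp_all add: power_mono abs_square_le_1)
  then have rts: "r^2 * t^2 \<le> r^2 * s^2" "r^2 * s^2 \<le> r^2"
    using r2 by (simp_all add: mult_left_mono mult_left_le)
  then have den: "0 < 1 - r^2 * t^2" "0 < 1 - r^2 * s^2" using r2 by linarith+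
  have rhs: "0 \<le> (1 - r^2) * D / (1 - (r * s)^2)"
    using r2 D den by (simp add: power_mult_distrib)
  show ?thesis
  proof (cases "(1 - r^2) * t - r * (1 - t^2) \<le> 0")
    case True
    then show ?thesis
      using den rhs unfolding hyp_deriv_bound_def by (meson divide_nonpos_pos order_trans)
  next
    case False
    have "(1 - r^2) * t \<le> (1 - r^2) * s" "r * (1 - s^2) \<le> r * (1 - t^2)"
      using t r r2 ts by (simp_all add: mult_left_mono)
    then have mono: "(1 - r^2) * t - r * (1 - t^2) \<le> (1 - r^2) * s - r * (1 - s^2)" by linarith
    have "hyp_deriv_bound r t \<le> ((1 - r^2) * t - r * (1 - t^2)) / (1 - r^2 * s^2)"
      unfolding hyp_deriv_bound_def using False den rts by (intro divide_left_mono) auto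
    also have "\<dots> \<le> (1 - r^2) * D / (1 - r^2 * s^2)"
      using mono hD den by (intro divide_right_mono) auto
    finally show ?thesis by (simp add: power_mult_distrib)
  qed
qed

lemma hyp_deriv_mult_factor_ge:
  assumes holh: "h holomorphic_on ball 0 1" and hle: "\<And>z. cmod z < 1 \<Longrightarrow> cmod (h z) \<le> 1"
    and gh: "\<And>z. cmod z < 1 \<Longrightarrow> g z = z * h z" and w: "cmod w < 1"
    and t: "0 \<le> t" "t \<le> cmod (h w)"
  shows "hyp_deriv_bound (cmod w) t \<le> hyp_deriv g w"
proof -
  define r s where "r = cmod w" and "s = cmod (h w)"
  have "(h has_field_derivative deriv h w) (at w)"
    using holh w by (intro holomorphic_derivI[OF holh open_ball]) auto
  then have "((\<lambda>x. x * h x) has_field_derivative h w + deriv h w * w) (at w)"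
    using DERIV_mult[OF DERIV_ident] by fastforce
  then have "(g has_field_derivative h w + deriv h w * w) (at w)"
    by (rule has_field_derivative_transform_within_open[OF _ open_ball[of 0 1]]) (use w gh in simp_all)
  then have "cmod (deriv g w) = cmod (h w - - (deriv h w * w))" by (simp add: DERIV_imp_deriv)
  then have Dg: "s - r * cmod (deriv h w) \<le> cmod (deriv g w)"
    using norm_triangle_ineq2[of "h w" "- (deriv h w * w)"] unfolding r_def s_def
    by (simp add: norm_mult mult.commute)
  have r: "0 \<le> r" "r^2 \<le> 1" using w unfolding r_def by (simp_all add: abs_square_le_1)
  have "(1 - r^2) * (s - r * cmod (deriv h w)) \<le> (1 - r^2) * cmod (deriv g w)"
    using Dg r by (intro mult_left_mono) auto
  moreover have "r * ((1 - r^2) * cmod (deriv h w)) \<le> r * (1 - s^2)"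
    using closed_disc_map_estimates(2)[OF holh hle w] r unfolding r_def s_def
    by (intro mult_left_mono) auto
  ultimately have "(1 - r^2) * s - r * (1 - s^2) \<le> (1 - r^2) * cmod (deriv g w)"
    by (simp add: algebra_simps)
  then have "hyp_deriv_bound r t \<le> (1 - r^2) * cmod (deriv g w) / (1 - (r * s)^2)"
    using w t hle[OF w] unfolding r_def s_def by (intro hyp_deriv_bound_le) auto
  also have "\<dots> = hyp_deriv g w"
    unfolding hyp_deriv_def gh[OF w] r_def s_def by (simp add: norm_mult)
  finally show ?thesis unfolding r_def .
qed

lemma cnj_mult_sgn: "cnj z * sgn z = of_real (cmod z)"
proof (cases "z = 0")
  case False
  have "cnj z * sgn z = of_real ((cmod z)^2) / of_real (cmod z)"
    using complex_norm_square[of z] by (simp add: sgn_eq mult.commute)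
  then show ?thesis using False by (simp add: power2_eq_square)
qed simp

lemma exists_unit_aligned: "\<exists>v. cmod v = 1 \<and> cnj a * v * p = of_real (cmod a * cmod p)"
proof (cases "a * cnj p = 0")
  case True
  then show ?thesis by (intro exI[of _ 1]) auto
next
  case False
  have "cnj a * sgn (a * cnj p) * p = cnj (a * cnj p) * sgn (a * cnj p)" by simp
  also have "\<dots> = of_real (cmod a * cmod p)" by (simp only: cnj_mult_sgn) (simp add: norm_mult)
  finally show ?thesis using False by (intro exI[of _ "sgn (a * cnj p)"]) (simp add: norm_sgn)
qed

lemma norm_moebius_ge:
  assumes a: "cmod a < 1" and u: "cmod u < 1" and re: "0 \<le> Re (cnj a * u)"
  shows "cmod u \<le> cmod (moebius (-a) u)"
proof -
  define A U X where "A = (cmod a)^2" and "U = (cmod u)^2" and "X = Re (cnj a * u)"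
  have "(cmod (u + a))^2 = U + A + 2 * X" "(cmod (1 + cnj a * u))^2 = 1 + A * U + 2 * X"
    unfolding A_def U_def X_def cmod_power2 by (simp_all add: power2_eq_square algebra_simps)
  moreover have "U * (1 + A * U + 2 * X) \<le> U + A + 2 * X"
  proof -
    have "0 \<le> U" "U < 1" "0 \<le> A" "0 \<le> X" using u re unfolding U_def A_def X_def
      by (simp_all add: abs_square_less_1)
    then have "0 \<le> A * (1 - U^2) + 2 * X * (1 - U)" by (simp add: abs_square_le_1)
    then show ?thesis by (simp add: algebra_simps power2_eq_square)
  qed
  ultimately have "(cmod u * cmod (1 + cnj a * u))^2 \<le> (cmod (u + a))^2"
    unfolding power_mult_distrib U_def by simp
  then have "cmod u * cmod (1 + cnj a * u) \<le> cmod (u + a)" by (rule power2_le_imp_le) simp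
  moreover have "0 < cmod (1 + cnj a * u)" using moebius_denom_nonzero[of "-a" u] a u by simp
  ultimately show ?thesis by (simp add: Moebius_function_simple norm_divide le_divide_eq)
qed

lemma exists_aligned_point_hyp_deriv_ge:
  assumes hol: "g holomorphic_on ball 0 1" and into: "g ` ball 0 1 \<subseteq> ball 0 1" and g0: "g 0 = 0"
    and r: "0 \<le> r" "r < 1"
    and t: "0 \<le> t" "t \<le> cmod (deriv g 0) - pick_radius r (cmod (deriv g 0))"
  shows "\<exists>w\<in>ball 0 1. r * t \<le> cmod (g w) \<and> 0 \<le> Re (cnj a * g w) \<and> hyp_deriv_bound r t \<le> hyp_deriv g w"
proof -
  obtain h where holh: "h holomorphic_on ball 0 1" and gh: "\<And>z. cmod z < 1 \<Longrightarrow> g z = z * h z"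
    and dh0: "deriv g 0 = h 0" and hle: "\<And>z. cmod z < 1 \<Longrightarrow> cmod (h z) \<le> 1"
    using schwarz_factor[OF hol into g0] by blast
  define d where "d = cmod (h 0)"
  \<comment> \<open>Aligning \<open>w\<close> with \<open>a\<close> and \<open>h 0\<close> gives \<open>Re (cnj a * g w) \<ge> 0\<close>, as
    \<open>norm_moebius_ge\<close> requires.\<close>
  obtain v where v: "cmod v = 1" and av: "cnj a * v * h 0 = of_real (cmod a * d)"
    using exists_unit_aligned unfolding d_def by blast
  define w where "w = of_real r * v"
  have wr: "cmod w = r" and w: "cmod w < 1" using v r unfolding w_def by (simp_all add: norm_mult)
  define e where "e = cmod (h w - h 0)"
  have e: "e \<le> d - t"
    using closed_disc_map_estimates(1)[OF holh hle w] t dh0 unfolding e_def d_def wr by simp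
  have "d \<le> cmod (h w) + e"
    using norm_triangle_ineq2[of "h 0" "h w"] unfolding d_def e_def by (simp add: norm_minus_commute)
  then have ht: "t \<le> cmod (h w)" using e by simp
  have "r * t \<le> cmod (g w)"
    using ht r unfolding gh[OF w] norm_mult wr by (intro mult_left_mono)
  moreover have "0 \<le> Re (cnj a * g w)"
  proof -
    define q where "q = cnj a * v * (h w - h 0)"
    have "cnj a * g w = of_real r * (cnj a * v * h 0 + q)"
      unfolding gh[OF w] unfolding w_def q_def by (simp add: algebra_simps)
    then have "Re (cnj a * g w) = r * (cmod a * d + Re q)" unfolding av by simp
    moreover have "- (cmod a * e) \<le> Re q"
      using abs_Re_le_cmod[of q] v unfolding q_def e_def by (simp add: norm_mult)
    moreover have "cmod a * e \<le> cmod a * d" using e t by (intro mult_left_mono) auto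
    ultimately show ?thesis using r by simp
  qed
  moreover have "hyp_deriv_bound r t \<le> hyp_deriv g w"
    using hyp_deriv_mult_factor_ge[OF holh hle gh w t(1) ht] unfolding wr .
  ultimately show ?thesis using w by auto
qed

lemma exists_level_point_hyp_deriv_ge:
  assumes hol: "f holomorphic_on ball 0 1" and into: "f ` ball 0 1 \<subseteq> ball 0 1"
    and z0: "cmod z0 < 1" and r: "0 \<le> r" "r < 1"
    and t: "0 \<le> t" "t \<le> hyp_deriv f z0 - pick_radius r (hyp_deriv f z0)"
  shows "\<exists>z\<in>ball 0 1. r * t \<le> cmod (f z) \<and> hyp_deriv_bound r t \<le> hyp_deriv f z"
proof -
  define a where "a = f z0"
  have a: "cmod a < 1" using into z0 unfolding a_def by (metis image_subset_iff mem_ball_0)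
  have mz0: "cmod (-z0) < 1" using z0 by simp
  define g where "g = (\<lambda>x. moebius a (f (moebius (-z0) x)))"
  have holg: "g holomorphic_on ball 0 1" and intog: "g ` ball 0 1 \<subseteq> ball 0 1"
    unfolding g_def using moebius_conj_self_map[OF hol into a mz0] by auto
  have g0: "g 0 = 0"
    unfolding g_def a_def by (simp add: Moebius_function_of_zero Moebius_function_eq_zero)
  have hdg: "hyp_deriv g x = hyp_deriv f (moebius (-z0) x)" if "cmod x < 1" for x
    unfolding g_def by (rule hyp_deriv_moebius_conj[OF hol into a mz0 that])
  have "hyp_deriv f z0 = cmod (deriv g 0)"
    using hdg[of 0] hyp_deriv_at_fixed_origin[of g, OF g0] by (simp add: Moebius_function_of_zero)
  then obtain w where w: "cmod w < 1" and gw: "r * t \<le> cmod (g w)" "0 \<le> Re (cnj a * g w)"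
    and hyp: "hyp_deriv_bound r t \<le> hyp_deriv g w"
    using exists_aligned_point_hyp_deriv_ge[OF holg intog g0 r, of t a] t by auto
  define z where "z = moebius (-z0) w"
  have z: "cmod z < 1" unfolding z_def by (rule Moebius_function_norm_lt_1[OF mz0 w])
  then have "cmod (f z) < 1" using into by (simp add: image_subset_iff)
  then have "f z = moebius (-a) (g w)"
    using Moebius_function_compose[of "-a" a "f z"] a unfolding g_def z_def by simp
  then have "cmod (g w) \<le> cmod (f z)"
    using norm_moebius_ge[OF a _ gw(2)] intog w by (simp add: image_subset_iff)
  then show ?thesis using z gw(1) hyp hdg[OF w] unfolding z_def by force
qed

lemma exists_threshold_near_1:
  assumes r: "0 < r" "r < 1" and c: "c < r" and S: "S < 1"
  obtains d1 where "0 \<le> d1" "d1 < 1"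
    "\<And>d. d1 < d \<Longrightarrow> d \<le> 1 \<Longrightarrow> c < r * (d - pick_radius r d) \<and> 0 < d - pick_radius r d
      \<and> S < hyp_deriv_bound r (d - pick_radius r d)"
proof -
  define T where "T d = d - pick_radius r d" for d
  define P where "P d \<longleftrightarrow> c < r * T d \<and> 0 < T d \<and> S < hyp_deriv_bound r (T d)" for d
  have r2: "r^2 < 1" using r by (simp add: abs_square_less_1)
  have T1: "T 1 = 1" and L1: "hyp_deriv_bound r 1 = 1"
    using r2 unfolding T_def pick_radius_def hyp_deriv_bound_def by simp_all
  have limT: "(T \<longlongrightarrow> 1) (at_left 1)"
  proof -
    have "(T \<longlongrightarrow> T 1) (at_left 1)"
      unfolding T_def pick_radius_def using r by (intro tendsto_intros) auto
    then show ?thesis using T1 by simp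
  qed
  have limL: "((\<lambda>d. hyp_deriv_bound r (T d)) \<longlongrightarrow> 1) (at_left 1)"
  proof -
    have "((\<lambda>d. hyp_deriv_bound r (T d)) \<longlongrightarrow> hyp_deriv_bound r 1) (at_left 1)"
      unfolding hyp_deriv_bound_def using r2 by (intro tendsto_intros limT) auto
    then show ?thesis using L1 by simp
  qed
  have "c / r < 1" using r c by simp
  have "eventually P (at_left 1)"
    using order_tendstoD(1)[OF limT \<open>c / r < 1\<close>] order_tendstoD(1)[OF limT zero_less_one]
      order_tendstoD(1)[OF limL S]
    unfolding P_def by eventually_elim (use r in \<open>simp add: divide_less_eq mult.commute\<close>)
  then obtain d0 where d0: "d0 < 1" "\<And>d. d0 < d \<Longrightarrow> d < 1 \<Longrightarrow> P d"
    unfolding eventually_at_left_field by blast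
  moreover have "P 1" unfolding P_def T1 L1 using c S by simp
  ultimately have "P d" if "max d0 0 < d" "d \<le> 1" for d
    using that by (cases "d = 1") auto
  then show ?thesis using that[of "max d0 0"] d0 unfolding P_def T_def by simp
qed

lemma sup0_upper: "bdd_above A \<Longrightarrow> x \<in> A \<Longrightarrow> x \<le> sup0 A"
  unfolding sup0_def by (auto intro: cSup_upper)

lemma sup0_least: "(\<And>x. x \<in> A \<Longrightarrow> x \<le> b) \<Longrightarrow> 0 \<le> b \<Longrightarrow> sup0 A \<le> b"
  unfolding sup0_def by (auto intro: cSup_least)

theorem mainTheorem11:
  fixes f :: "complex \<Rightarrow> complex" and c :: real
  assumes "f holomorphic_on ball 0 1"
    and "f ` ball 0 1 \<subseteq> ball 0 1"
    and "0 < c" and "c < 1"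
    and "sup0 {hyp_deriv f z | z. z \<in> ball 0 1 \<and> cmod (f z) \<ge> c} < 1"
  shows "sup0 {hyp_deriv f z | z. z \<in> ball 0 1} < 1"
proof -
  note hol = assms(1) and into = assms(2)
  define S where "S = sup0 {hyp_deriv f z | z. z \<in> ball 0 1 \<and> cmod (f z) \<ge> c}"
  have level: "hyp_deriv f z \<le> S" if "cmod z < 1" "c \<le> cmod (f z)" for z
    unfolding S_def using that hyp_deriv_le_1[OF hol into]
    by (intro sup0_upper) (auto intro: bdd_aboveI[of _ 1])
  define r where "r = (1 + c) / 2"
  have r: "0 < r" "r < 1" "c < r" using assms(3,4) unfolding r_def by auto
  obtain d1 where d1: "0 \<le> d1" "d1 < 1" and threshold: "\<And>d. d1 < d \<Longrightarrow> d \<le> 1 \<Longrightarrow>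
      c < r * (d - pick_radius r d) \<and> 0 < d - pick_radius r d \<and> S < hyp_deriv_bound r (d - pick_radius r d)"
    using exists_threshold_near_1[OF r(1,2,3)] assms(5) unfolding S_def by blast
  have "hyp_deriv f z0 \<le> d1" if z0: "cmod z0 < 1" for z0
  proof (rule ccontr)
    define t where "t = hyp_deriv f z0 - pick_radius r (hyp_deriv f z0)"
    assume "\<not> hyp_deriv f z0 \<le> d1"
    then have t: "c < r * t" "0 < t" "S < hyp_deriv_bound r t"
      using threshold hyp_deriv_le_1[OF hol into z0] unfolding t_def by auto
    obtain z where "z \<in> ball 0 1" "r * t \<le> cmod (f z)" "hyp_deriv_bound r t \<le> hyp_deriv f z"
      using exists_level_point_hyp_deriv_ge[OF hol into z0 _ r(2), of t] r(1) t(2)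
      unfolding t_def by auto
    then show False using level[of z] t by simp
  qed
  then have "sup0 {hyp_deriv f z | z. z \<in> ball 0 1} \<le> d1"
    by (intro sup0_least[OF _ d1(1)]) auto
  then show ?thesis using d1(2) by simp
qed

end
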